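(* In the setting of the context, for every fixed $i\in\{1,\dots,n\}$, $$\prod_{(x,y)\in\mathfrak{X}}\frac{\max\big(1,|\beta_i(x,y)-m(x,y)|\big)}{e^6s(ns)^{2s/n}\,h^{1/n}\,(2Y_S+7/2)}\le 1.$$
   Context: Setting: $n\ge3$; $F(x,y)=\sum_{i=0}^s a_ix^{n_i}y^{n-n_i}\in\mathbb{Z}[x,y]$ of degree $n$, irreducible over $\mathbb{Q}$, all $a_i\neq0$, $0=n_0<\dots<n_s=n$, discriminant $D$. $R=n^{800\log^2n}$; $h$ a positive integer and $\kappa>1$ an integer with $h\le |D|^{\frac{1}{2(n-1)(2+1/\kappa)}}/\big((3R)^{n/2}(ns)^{2s+n}\big)$; $Y_S=e^6s(ns)^{2s/n}h^{1/(\kappa n)}$. Write $F(x,y)=a\prod_{i=1}^n(x-\alpha_iy)$ ($\alpha_i$ the roots of $F(x,1)$) and $L_i(x,y)=x-\alpha_iy$. A "solution" is a pair $(x,y)\in\mathbb{Z}^2$ with $\gcd(x,y)=1$ and $1\le|F(x,y)|\le h$, with $(x,y)$ and $(-x,-y)$ identified. Assume there is a solution with $0\le y\le Y_S$, and fix one such, $(x_0,y_0)$, with $y_0\ge0$ minimal. Index the roots so that $|L_1(x_0,y_0)|=\min_i|L_i(x_0,y_0)|$. There is at most one solution $(x^*,y^* )$ with $0<y^*\le Y_S$ and $|L_1(x^*,y^* )|<1/(2Y_S)$; let $\mathbf{A}=\{(x_0,y_0)\}$ together with $(x^*,y^* )$ if it exists. For a primitive $(x,y)$ choose integers $x',y'$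 with $x'y-xy'=1$ and set $\beta_j(x,y)=-L_j(x',y')/L_j(x,y)$ (so that $F(ux+wx',uy+wy')=F(x,y)\prod_j(u-\beta_j(x,y)w)$), and let $m(x,y)$ be an integer with $|\mathrm{Re}\,\beta_1(x,y)-m(x,y)|\le 1/2$. For $1\le i\le n$, $\mathfrak{X}_i$ is the set of solutions $(x,y)\notin\mathbf{A}$ with $1\le y\le Y_S$ and $|L_i(x,y)|\le\frac{1}{2y}$. For each nonempty $\mathfrak{X}_i$ let $(x^{(i)},y^{(i)})$ be an element of $\mathfrak{X}_i$ with largest $y$. $\mathfrak{X}$ is the set of solutions $(x,y)\notin\mathbf{A}$ with $1\le y\le Y_S$, with all the elements $(x^{(1)},y^{(1)}),\dots,(x^{(n)},y^{(n)})$ removed. *)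

theory Defs
  imports "HOL-Analysis.Analysis" "HOL-Computational_Algebra.Polynomial" "HOL-Computational_Algebra.Polynomial_Factorial"
begin

definition bform :: "int poly \<Rightarrow> int \<Rightarrow> int \<Rightarrow> int" where
  "bform f x y = (\<Sum>k\<le>degree f. coeff f k * x ^ k * y ^ (degree f - k))"

definition Lf :: "complex \<Rightarrow> int \<Rightarrow> int \<Rightarrow> complex" where
  "Lf al x y = of_int x - al * of_int y"

definition beta :: "complex \<Rightarrow> int \<Rightarrow> int \<Rightarrow> int \<Rightarrow> int \<Rightarrow> complex" where
  "beta al x y x' y' = - Lf al x' y' / Lf al x y"

definition form_disc :: "int \<Rightarrow> nat \<Rightarrow> (nat \<Rightarrow> complex) \<Rightarrow> complex" where
  "form_disc a n al = of_int a ^ (2 * n - 2) * (\<Prod>i\<in>{1..n}. \<Prod>j\<in>{i<..n}. (al i - al j) ^ 2)"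

definition is_solution :: "int poly \<Rightarrow> nat \<Rightarrow> int \<Rightarrow> int \<Rightarrow> bool" where
  "is_solution f h x y \<longleftrightarrow> coprime x y \<and> 1 \<le> \<bar>bform f x y\<bar> \<and> \<bar>bform f x y\<bar> \<le> int h"

end

theory Submission
  imports Defs
begin

text \<open>With x' y - x y' = 1 one has \<open>\<beta>\<^sub>j(x,y) = -y'/y - 1/(y L\<^sub>j(x,y))\<close>, so all
  \<open>\<beta>\<^sub>j(x,y)\<close> lie within \<open>1/(y |L\<^sub>j(x,y)|)\<close> of the same real number. For (x,y) in
  \<open>\<X>\<close> every \<open>|L\<^sub>j(x,y)|\<close> is at least \<open>1/(2Y\<^sub>S)\<close>: either (x,y) is not in \<open>\<X>\<^sub>j\<close>, or it
  is, and then the nonzero integer determinant \<open>x v - u y\<close> against the removed pair (u,v) of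
  \<open>\<X>\<^sub>j\<close> with largest v forces \<open>|L\<^sub>j(x,y)| \<ge> 1/(2v)\<close>. Hence \<open>|\<beta>\<^sub>i - m| \<le> 1/2 + 4Y\<^sub>S\<close>,
  and every factor of the product is at most 1 because the normalising constant is at least
  \<open>e\<^sup>6 \<ge> 2\<close>.\<close>

lemma beta_eq_Lf:
  fixes x y x' y' :: int
  assumes "x' * y - x * y' = 1" "y \<noteq> 0" "Lf a x y \<noteq> 0"
  shows "beta a x y x' y' = - (of_int y' / of_int y) - 1 / (of_int y * Lf a x y)"
proof -
  have "of_int x' * of_int y - of_int x * of_int y' = (1::complex)"
    using assms(1) by (metis of_int_1 of_int_diff of_int_mult)
  then have "Lf a x' y' * of_int y = of_int y' * Lf a x y + 1"
    unfolding Lf_def by (simp add: algebra_simps)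
  then show ?thesis
    using assms(2,3) unfolding beta_def by (simp add: field_simps)
qed

lemma det_ne_zero_if_coprime_distinct:
  fixes x y u v :: int
  assumes "coprime x y" "coprime u v" "0 < y" "0 < v" "(x, y) \<noteq> (u, v)"
  shows "x * v - u * y \<noteq> 0"
proof
  assume "x * v - u * y = 0"
  then have eq: "x * v = u * y" by simp
  then have "y dvd v" "v dvd y"
    using assms(1,2) by (metis coprime_commute coprime_dvd_mult_right_iff dvd_triv_left dvd_triv_right)+
  then have "y = v" using assms(3,4) by (simp add: zdvd_antisym_nonneg)
  with eq assms(3,5) show False by simp
qed

lemma Lf_det: "(of_int (x * v - u * y) :: complex) = Lf a x y * of_int v - Lf a u v * of_int y"
  unfolding Lf_def by (simp add: algebra_simps)

lemma Lf_ge_if_close_pair: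
  fixes x y u v :: int and a :: complex
  assumes "coprime x y" "coprime u v" "1 \<le> y" "y \<le> v" "(x, y) \<noteq> (u, v)"
    and close: "cmod (Lf a u v) \<le> 1 / (2 * of_int v)"
  shows "1 / (2 * of_int v) \<le> cmod (Lf a x y)"
proof -
  have "1 \<le> \<bar>real_of_int (x * v - u * y)\<bar>"
    using det_ne_zero_if_coprime_distinct[OF assms(1,2)] assms(3-5) by linarith
  also have "\<dots> = cmod (Lf a x y * of_int v - Lf a u v * of_int y)"
    by (simp only: Lf_det[symmetric] norm_of_int)
  also have "\<dots> \<le> cmod (Lf a x y) * of_int v + cmod (Lf a u v) * of_int y"
    using norm_triangle_ineq4[of "Lf a x y * of_int v" "Lf a u v * of_int y"] assms(3,4)
    by (simp add: norm_mult)
  also have "cmod (Lf a u v) * of_int y \<le> 1 / (2 * of_int v) * of_int v"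
    using close assms(3,4) by (intro mult_mono) auto
  finally show ?thesis using assms(3,4) by (simp add: field_simps)
qed

lemma Lf_ge_except_largest_close_pair:
  fixes a :: complex and Y :: real and S Xi :: "(int \<times> int) set"
  assumes S: "\<forall>(x, y)\<in>S. coprime x y \<and> 1 \<le> y \<and> real_of_int y \<le> Y"
    and Xi: "Xi = {(x, y). (x, y) \<in> S \<and> cmod (Lf a x y) \<le> 1 / (2 * real_of_int y)}"
    and largest: "Xi \<noteq> {} \<longrightarrow> p \<in> Xi \<and> (\<forall>q\<in>Xi. snd q \<le> snd p)"
    and xy: "(x, y) \<in> S" "Xi \<noteq> {} \<longrightarrow> (x, y) \<noteq> p"
  shows "1 / (2 * Y) \<le> cmod (Lf a x y)"
proof -
  have y: "coprime x y" "1 \<le> y" "real_of_int y \<le> Y" using S xy(1) by auto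
  show ?thesis
  proof (cases "(x, y) \<in> Xi")
    case True
    obtain u v where p: "p = (u, v)" by fastforce
    with True largest have "(u, v) \<in> Xi" "y \<le> v" by force+
    then have "coprime u v" "y \<le> v" "real_of_int v \<le> Y" "cmod (Lf a u v) \<le> 1 / (2 * of_int v)"
      using S Xi by auto
    with y True xy(2) p Lf_ge_if_close_pair[of x y u v a]
    have "1 / (2 * of_int v) \<le> cmod (Lf a x y)" by auto
    moreover have "1 / (2 * Y) \<le> 1 / (2 * real_of_int v)"
      using y \<open>y \<le> v\<close> \<open>real_of_int v \<le> Y\<close> by (simp add: frac_le)
    ultimately show ?thesis by linarith
  next
    case False
    then have "1 / (2 * real_of_int y) < cmod (Lf a x y)" using Xi xy(1) by auto
    moreover have "1 / (2 * Y) \<le> 1 / (2 * real_of_int y)" using y by (simp add: frac_le)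
    ultimately show ?thesis by linarith
  qed
qed

lemma norm_inverse_mult_le:
  fixes y Y :: real and L :: complex
  assumes "1 \<le> y" "0 < Y" "1 / (2 * Y) \<le> cmod L"
  shows "cmod (1 / (of_real y * L)) \<le> 2 * Y"
proof -
  have L: "0 < cmod L" using assms(2,3) by (smt (verit) divide_pos_pos)
  have "cmod (1 / (of_real y * L)) \<le> 1 / cmod L"
    using assms(1) L by (simp add: norm_divide norm_mult divide_simps)
  also have "\<dots> \<le> 2 * Y" using assms(2,3) L by (simp add: field_simps)
  finally show ?thesis .
qed

text \<open>Only the real part of \<open>\<beta>\<^sub>1\<close> is rounded, but \<open>\<beta>\<^sub>i\<close> and \<open>\<beta>\<^sub>1\<close> differ from the common
  real number t by at most 2Y each.\<close>

lemma beta_sub_round_le: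
  fixes t m y Y :: real and L1 Li :: complex
  assumes "1 \<le> y" "0 < Y" "1 / (2 * Y) \<le> cmod L1" "1 / (2 * Y) \<le> cmod Li"
    and round: "\<bar>Re (of_real t - 1 / (of_real y * L1)) - m\<bar> \<le> 1/2"
  shows "cmod (of_real t - 1 / (of_real y * Li) - of_real m) \<le> 1/2 + 4 * Y"
proof -
  have "\<bar>Re (1 / (of_real y * L1))\<bar> \<le> 2 * Y"
    using norm_inverse_mult_le[OF assms(1-3)] abs_Re_le_cmod order_trans by blast
  moreover have "Re (of_real t - 1 / (of_real y * L1)) = t - Re (1 / (of_real y * L1))" by simp
  ultimately have "cmod (of_real (t - m) :: complex) \<le> 1/2 + 2 * Y"
    using round by (simp only: norm_of_real)
  moreover have regroup:
    "of_real t - 1 / (of_real y * Li) - of_real m = of_real (t - m) - 1 / (of_real y * Li)"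
    by (simp add: algebra_simps)
  ultimately show ?thesis unfolding regroup
    using norm_triangle_ineq4[of "of_real (t - m)" "1 / (of_real y * Li)"]
      norm_inverse_mult_le[OF assms(1,2,4)] by linarith
qed

lemma beta_sub_round_le_Lf:
  fixes x y x' y' m :: int and Y :: real and a1 ai :: complex
  assumes "x' * y - x * y' = 1" "1 \<le> y" "0 < Y"
    and "1 / (2 * Y) \<le> cmod (Lf a1 x y)" "1 / (2 * Y) \<le> cmod (Lf ai x y)"
    and "\<bar>Re (beta a1 x y x' y') - of_int m\<bar> \<le> 1/2"
  shows "cmod (beta ai x y x' y' - of_int m) \<le> 1/2 + 4 * Y"
proof -
  define t where "t = - (real_of_int y' / real_of_int y)"
  have beta: "beta a x y x' y' = of_real t - 1 / (of_real (of_int y) * Lf a x y)"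
    if "1 / (2 * Y) \<le> cmod (Lf a x y)" for a
  proof -
    have "0 < cmod (Lf a x y)" using that assms(3) by (smt (verit) divide_pos_pos)
    then show ?thesis using beta_eq_Lf[OF assms(1)] assms(2) by (simp add: t_def)
  qed
  show ?thesis
    using beta_sub_round_le[of "of_int y" Y "Lf a1 x y" "Lf ai x y" t "of_int m"] assms(2-6)
    unfolding beta[OF assms(4)] beta[OF assms(5)] by simp
qed

lemma card_nonzero_coeffs_ge_2:
  fixes f :: "'a::zero poly"
  assumes "coeff f 0 \<noteq> 0" "degree f \<noteq> 0"
  shows "2 \<le> card {k. coeff f k \<noteq> 0}"
proof -
  have "finite {k. coeff f k \<noteq> 0}"
    by (rule finite_subset[of _ "{..degree f}"]) (auto intro: le_degree)
  moreover have "{0, degree f} \<subseteq> {k. coeff f k \<noteq> 0}"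
    using assms by (auto simp: leading_coeff_0_iff)
  ultimately have "card {0, degree f} \<le> card {k. coeff f k \<noteq> 0}" by (rule card_mono)
  with assms(2) show ?thesis by simp
qed

lemma normalising_constant_ge_2:
  fixes n s h :: nat and a b :: real
  assumes "1 \<le> n" "1 \<le> s" "1 \<le> h" "0 \<le> a" "0 \<le> b"
  shows "2 \<le> exp 6 * real s * real (n * s) powr a * real h powr b"
proof -
  have "2 \<le> exp (6::real)" using exp_ge_add_one_self[of 6] by linarith
  moreover have "1 \<le> real (n * s)"
    using mult_le_mono[OF assms(1,2)] by (metis mult_1 of_nat_1 of_nat_le_iff)
  then have "1 \<le> real (n * s) powr a" "1 \<le> real h powr b"
    using assms(3-5) by (simp_all add: ge_one_powr_ge_zero)
  ultimately have "2 * 1 * 1 * 1 \<le> exp 6 * real s * real (n * s) powr a * real h powr b"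
    using assms(2) by (intro mult_mono) auto
  then show ?thesis by simp
qed

lemma max_one_div_le_one:
  fixes b C Y :: real
  assumes "b \<le> 1/2 + 4 * Y" "2 \<le> C" "0 \<le> Y"
  shows "0 \<le> max 1 b / (C * (2 * Y + 7 / 2)) \<and> max 1 b / (C * (2 * Y + 7 / 2)) \<le> 1"
proof -
  have "2 * (2 * Y + 7 / 2) \<le> C * (2 * Y + 7 / 2)"
    using assms(2,3) by (intro mult_right_mono) auto
  then have "max 1 b \<le> C * (2 * Y + 7 / 2)" "0 < C * (2 * Y + 7 / 2)"
    using assms by auto
  then show ?thesis by (simp add: divide_le_eq_1)
qed

theorem lemma4p5:
  fixes f :: "int poly" and n s h \<kappa> i :: nat and \<alpha> :: "nat \<Rightarrow> complex"
    and x0 y0 :: int and xp yp m :: "int \<Rightarrow> int \<Rightarrow> int" and sel :: "nat \<Rightarrow> int \<times> int"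
    and R Y :: real and A X :: "(int \<times> int) set" and Xi :: "nat \<Rightarrow> (int \<times> int) set"
  assumes deg: "n = degree f" and n3: "n \<ge> 3"
    and c0: "coeff f 0 \<noteq> 0"
    and irr: "irreducible (map_poly rat_of_int f)"
    and s_def: "s = card {k. coeff f k \<noteq> 0} - 1"
    and roots: "map_poly complex_of_int f = smult (of_int (lead_coeff f)) (\<Prod>j\<in>{1..n}. [:- \<alpha> j, 1:])"
    and h1: "h \<ge> 1" and kappa: "\<kappa> > 1"
    and R_def: "R = real n powr (800 * (ln (real n))\<^sup>2)"
    and hbound: "real h \<le> cmod (form_disc (lead_coeff f) n \<alpha>) powr (1 / (2 * (real n - 1) * (2 + 1 / real \<kappa>)))
                   / ((3 * R) powr (real n / 2) * real (n * s) ^ (2 * s + n))"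
    and Y_def: "Y = exp 6 * real s * real (n * s) powr (2 * real s / real n) * real h powr (1 / (real \<kappa> * real n))"
    and sol0: "is_solution f h x0 y0" and y0nn: "0 \<le> y0" and y0Y: "real_of_int y0 \<le> Y"
    and y0min: "\<forall>x y. is_solution f h x y \<and> 0 \<le> y \<longrightarrow> y0 \<le> y"
    and idx: "\<forall>j\<in>{1..n}. cmod (Lf (\<alpha> 1) x0 y0) \<le> cmod (Lf (\<alpha> j) x0 y0)"
    and A_def: "A = {(x0, y0)} \<union> {(x, y). is_solution f h x y \<and> 0 < y \<and> real_of_int y \<le> Y
                      \<and> cmod (Lf (\<alpha> 1) x y) < 1 / (2 * Y)}"
    and xpyp: "\<forall>x y. coprime x y \<longrightarrow> xp x y * y - x * yp x y = 1"
    and m_def: "\<forall>x y. coprime x y \<longrightarrow> \<bar>Re (beta (\<alpha> 1) x y (xp x y) (yp x y)) - real_of_int (m x y)\<bar> \<le> 1 / 2"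
    and Xi_def: "\<forall>j. Xi j = {(x, y). is_solution f h x y \<and> (x, y) \<notin> A \<and> 1 \<le> y \<and> real_of_int y \<le> Y
                      \<and> cmod (Lf (\<alpha> j) x y) \<le> 1 / (2 * real_of_int y)}"
    and sel: "\<forall>j\<in>{1..n}. Xi j \<noteq> {} \<longrightarrow> sel j \<in> Xi j \<and> (\<forall>p\<in>Xi j. snd p \<le> snd (sel j))"
    and X_def: "X = {(x, y). is_solution f h x y \<and> (x, y) \<notin> A \<and> 1 \<le> y \<and> real_of_int y \<le> Y}
                    - sel ` {j\<in>{1..n}. Xi j \<noteq> {}}"
    and i: "i \<in> {1..n}"
  shows "(\<Prod>(x, y)\<in>X. max 1 (cmod (beta (\<alpha> i) x y (xp x y) (yp x y) - of_int (m x y)))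
           / (exp 6 * real s * real (n * s) powr (2 * real s / real n) * real h powr (1 / real n)
              * (2 * Y + 7 / 2))) \<le> 1"
proof -
  define S where "S = {(x, y). is_solution f h x y \<and> (x, y) \<notin> A \<and> 1 \<le> y \<and> real_of_int y \<le> Y}"
  define C where "C = exp 6 * real s * real (n * s) powr (2 * real s / real n) * real h powr (1 / real n)"
  define b where "b x y = cmod (beta (\<alpha> i) x y (xp x y) (yp x y) - of_int (m x y))" for x y
  have S: "\<forall>(x, y)\<in>S. coprime x y \<and> 1 \<le> y \<and> real_of_int y \<le> Y"
    by (auto simp: S_def is_solution_def)
  have "1 \<le> s" using card_nonzero_coeffs_ge_2[OF c0] deg n3 s_def by simp
  then have C: "2 \<le> C" unfolding C_def using n3 h1 by (intro normalising_constant_ge_2) auto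
  show ?thesis unfolding C_def[symmetric] b_def[symmetric]
  proof (rule prod_le_1, clarify)
    fix x y assume "(x, y) \<in> X"
    then have xy: "(x, y) \<in> S" "\<forall>j\<in>{1..n}. Xi j \<noteq> {} \<longrightarrow> (x, y) \<noteq> sel j"
      unfolding X_def S_def by auto
    with S have y: "coprime x y" "1 \<le> y" "real_of_int y \<le> Y" by auto
    have L: "1 / (2 * Y) \<le> cmod (Lf (\<alpha> j) x y)" if j: "j \<in> {1..n}" for j
    proof (rule Lf_ge_except_largest_close_pair[OF S _ _ xy(1), where Xi = "Xi j" and p = "sel j"])
      show "Xi j = {(x, y). (x, y) \<in> S \<and> cmod (Lf (\<alpha> j) x y) \<le> 1 / (2 * real_of_int y)}"
        using Xi_def by (auto simp: S_def)
    qed (use sel xy(2) j in blast)+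
    have "b x y \<le> 1/2 + 4 * Y" unfolding b_def
      using beta_sub_round_le_Lf[of "xp x y" y x "yp x y" Y] xpyp m_def y L[of 1] L[OF i] n3 by auto
    with C y show "0 \<le> max 1 (b x y) / (C * (2 * Y + 7 / 2)) \<and> max 1 (b x y) / (C * (2 * Y + 7 / 2)) \<le> 1"
      by (intro max_one_div_le_one) auto
  qed
qed

end
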